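(* For every $f:\{0,1\}^n\to\{-1,1\}$, $$\mathbb E_{x,y}\sum_{\alpha,\beta\in\{0,1\}^n}\hat{f_x}^2(\alpha)\,\hat{f_y}^2(\beta)\,\widehat{f_{x+y}}^2(\alpha+\beta)=\mathbb E_y\sum_{\alpha\in\{0,1\}^n}\hat{f_y}^6(\alpha),$$ with $x,y$ independent uniform in $\{0,1\}^n$.
   Context: $\{0,1\}^n$ is identified with $\mathbb F_2^n$. $\hat h(\alpha)=\mathbb E_z h(z)(-1)^{\langle\alpha,z\rangle}$ with $\langle\alpha,z\rangle=\sum\alpha_iz_i\bmod 2$; $f_y(x)=f(x)f(x+y)$. *)

theory Defs
  imports Complex_Main
begin

text \<open>Points of {0,1}^n = F_2^n are modelled as functions 'n \<Rightarrow> bool for a finite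
  index type 'n (so n = CARD('n)); True stands for 1.\<close>

definition vadd :: "('n \<Rightarrow> bool) \<Rightarrow> ('n \<Rightarrow> bool) \<Rightarrow> ('n \<Rightarrow> bool)" where
  "vadd x y = (\<lambda>i. x i \<noteq> y i)"

definition ip :: "('n::finite \<Rightarrow> bool) \<Rightarrow> ('n \<Rightarrow> bool) \<Rightarrow> bool" where
  "ip a z = odd (card {i. a i \<and> z i})"

definition chr :: "('n::finite \<Rightarrow> bool) \<Rightarrow> ('n \<Rightarrow> bool) \<Rightarrow> real" where
  "chr a z = (if ip a z then -1 else 1)"

definition expect :: "(('n::finite \<Rightarrow> bool) \<Rightarrow> real) \<Rightarrow> real" where
  "expect h = (\<Sum>z\<in>UNIV. h z) / real (card (UNIV :: ('n \<Rightarrow> bool) set))"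

definition fourier :: "(('n::finite \<Rightarrow> bool) \<Rightarrow> real) \<Rightarrow> ('n \<Rightarrow> bool) \<Rightarrow> real" where
  "fourier h a = expect (\<lambda>z. h z * chr a z)"

definition fder :: "(('n \<Rightarrow> bool) \<Rightarrow> real) \<Rightarrow> ('n \<Rightarrow> bool) \<Rightarrow> ('n \<Rightarrow> bool) \<Rightarrow> real" where
  "fder f y = (\<lambda>x. f x * f (vadd x y))"

end

theory Submission
  imports Defs "HOL-Library.Cardinality"
begin

text \<open>Let K y s = \<Sum>z f(z) f(z+y) f(z+s) f(z+s+y) be the autocorrelation of f_y at s; it is
  symmetric in y and s. The squared transform of f_y is, up to normalisation, the transform of
  K y. Plancherel turns the left-hand side into \<Sum>x,y,w K x w K y w K (x+y) w, and the sum of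
  cubes of a transform into \<Sum>u,s A u A (u+s) A s, so the right-hand side becomes
  \<Sum>w,u,s K w u K w (u+s) K w s. The symmetry of K identifies the two. The identity holds for
  every real-valued f.\<close>

lemma vadd_commute: "vadd x y = vadd y x"
  unfolding vadd_def by auto

lemma vadd_vadd_cancel: "vadd x (vadd x y) = y"
  unfolding vadd_def by auto

lemma vadd_eq_zero_iff: "vadd x y = (\<lambda>_. False) \<longleftrightarrow> x = y"
  unfolding vadd_def by (auto simp: fun_eq_iff)

lemma sum_vadd_shift: "(\<Sum>v\<in>UNIV. g (vadd u v)) = (\<Sum>v\<in>UNIV. g v)"
  by (rule sum.reindex_bij_witness[where i = "vadd u" and j = "vadd u"]) (auto simp: vadd_vadd_cancel)

lemma chr_eq_prod: "chr a z = (\<Prod>i\<in>UNIV. if a i \<and> z i then -1 else 1)"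
proof -
  have "(\<Prod>i\<in>UNIV. if a i \<and> z i then -1 else (1::real)) = (-1) ^ card {i. a i \<and> z i}"
    by (simp add: prod.If_cases Collect_conj_eq)
  then show ?thesis
    by (simp add: chr_def ip_def minus_one_power_iff)
qed

lemma chr_vadd: "chr a (vadd u w) = chr a u * chr a w"
  by (simp add: chr_eq_prod vadd_def flip: prod.distrib) (rule prod.cong; auto)

lemma chr_commute: "chr a z = chr z a"
  unfolding chr_def ip_def by (simp add: conj_commute)

lemma chr_vadd_left: "chr (vadd a b) z = chr a z * chr b z"
  by (simp add: chr_commute[of _ z] chr_vadd)

lemma chr_mult_self: "chr a u * chr a u = 1"
  unfolding chr_def by simp

lemma sum_chr:
  "(\<Sum>\<alpha>\<in>UNIV. chr \<alpha> u) = (if u = (\<lambda>_. False) then real CARD('n \<Rightarrow> bool) else 0)"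
  for u :: "'n::finite \<Rightarrow> bool"
proof (cases "u = (\<lambda>_. False)")
  case True
  then show ?thesis by (simp add: chr_def ip_def)
next
  case False
  then obtain i where "u i" by auto
  then have "{j. j = i \<and> u j} = {i}" by auto
  then have chr_unit: "chr (\<lambda>j. j = i) u = -1"
    by (simp add: chr_def ip_def)
  have "chr (vadd (\<lambda>j. j = i) \<alpha>) u = - chr \<alpha> u" for \<alpha>
    by (simp add: chr_vadd_left chr_unit)
  then have "(\<Sum>\<alpha>\<in>UNIV. chr \<alpha> u) = - (\<Sum>\<alpha>\<in>UNIV. chr \<alpha> u)"
    using sum_vadd_shift[of "\<lambda>\<alpha>. chr \<alpha> u" "\<lambda>j. j = i"] by (simp add: sum_negf)
  then show ?thesis using False by simp
qed

lemma sum_chr_mult: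
  "(\<Sum>\<alpha>\<in>UNIV. chr \<alpha> u * chr \<alpha> w) = (if u = w then real CARD('n \<Rightarrow> bool) else 0)"
  for u w :: "'n::finite \<Rightarrow> bool"
  by (simp add: chr_vadd[symmetric] sum_chr vadd_eq_zero_iff)

definition dft :: "(('n::finite \<Rightarrow> bool) \<Rightarrow> real) \<Rightarrow> ('n \<Rightarrow> bool) \<Rightarrow> real" where
  "dft a \<alpha> = (\<Sum>u\<in>UNIV. chr \<alpha> u * a u)"

definition autocorr :: "(('n::finite \<Rightarrow> bool) \<Rightarrow> real) \<Rightarrow> ('n \<Rightarrow> bool) \<Rightarrow> real" where
  "autocorr a s = (\<Sum>u\<in>UNIV. a u * a (vadd u s))"

lemma fourier_eq_dft: "fourier h \<alpha> = dft h \<alpha> / real CARD('n \<Rightarrow> bool)"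
  for h :: "('n::finite \<Rightarrow> bool) \<Rightarrow> real"
  by (simp add: fourier_def expect_def dft_def mult.commute)

lemma dft_plancherel:
  "(\<Sum>\<beta>\<in>UNIV. dft p \<beta> * dft q \<beta>) = real CARD('n \<Rightarrow> bool) * (\<Sum>w\<in>UNIV. p w * q w)"
  for p q :: "('n::finite \<Rightarrow> bool) \<Rightarrow> real"
proof -
  have "(\<Sum>\<beta>\<in>UNIV. dft p \<beta> * dft q \<beta>)
      = (\<Sum>\<beta>\<in>UNIV. \<Sum>v\<in>UNIV. \<Sum>w\<in>UNIV. p v * q w * (chr \<beta> v * chr \<beta> w))"
    by (simp add: dft_def sum_product mult_ac)
  also have "\<dots> = (\<Sum>v\<in>UNIV. \<Sum>w\<in>UNIV. \<Sum>\<beta>\<in>UNIV. p v * q w * (chr \<beta> v * chr \<beta> w))"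
    by (subst sum.swap) (rule sum.cong[OF refl], rule sum.swap)
  also have "\<dots> = (\<Sum>v\<in>UNIV. \<Sum>w\<in>UNIV. p v * q w * (\<Sum>\<beta>\<in>UNIV. chr \<beta> v * chr \<beta> w))"
    by (simp add: sum_distrib_left)
  also have "\<dots> = real CARD('n \<Rightarrow> bool) * (\<Sum>w\<in>UNIV. p w * q w)"
    by (simp add: sum_chr_mult if_distrib sum_distrib_left mult_ac cong: if_cong)
  finally show ?thesis .
qed

lemma dft_square: "(dft a \<alpha>)\<^sup>2 = dft (autocorr a) \<alpha>"
proof -
  have "(dft a \<alpha>)\<^sup>2 = (\<Sum>u\<in>UNIV. chr \<alpha> u * a u * dft a \<alpha>)"
    by (simp add: power2_eq_square sum_distrib_right dft_def)
  also have "\<dots> = (\<Sum>u\<in>UNIV. \<Sum>s\<in>UNIV. chr \<alpha> u * a u * (chr \<alpha> (vadd u s) * a (vadd u s)))"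
  proof (rule sum.cong[OF refl])
    fix u
    show "chr \<alpha> u * a u * dft a \<alpha> = (\<Sum>s\<in>UNIV. chr \<alpha> u * a u * (chr \<alpha> (vadd u s) * a (vadd u s)))"
      using sum_vadd_shift[of "\<lambda>v. chr \<alpha> u * a u * (chr \<alpha> v * a v)" u]
      by (simp add: dft_def sum_distrib_left)
  qed
  also have "\<dots> = (\<Sum>u\<in>UNIV. \<Sum>s\<in>UNIV. chr \<alpha> s * (a u * a (vadd u s)))"
  proof (intro sum.cong refl)
    fix u s
    have "chr \<alpha> u * a u * (chr \<alpha> (vadd u s) * a (vadd u s))
        = (chr \<alpha> u * chr \<alpha> u) * chr \<alpha> s * (a u * a (vadd u s))"
      by (simp add: chr_vadd mult_ac)
    then show "chr \<alpha> u * a u * (chr \<alpha> (vadd u s) * a (vadd u s)) = chr \<alpha> s * (a u * a (vadd u s))"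
      by (simp add: chr_mult_self)
  qed
  also have "\<dots> = dft (autocorr a) \<alpha>"
    unfolding dft_def autocorr_def sum_distrib_left by (rule sum.swap)
  finally show ?thesis .
qed

lemma dft_vadd_frequency: "dft c (vadd \<alpha> \<beta>) = dft (\<lambda>w. chr \<alpha> w * c w) \<beta>"
  by (simp add: dft_def chr_vadd_left mult_ac)

lemma sum_dft_triple:
  "(\<Sum>\<alpha>\<in>UNIV. \<Sum>\<beta>\<in>UNIV. dft a \<alpha> * dft b \<beta> * dft c (vadd \<alpha> \<beta>))
     = (real CARD('n \<Rightarrow> bool))\<^sup>2 * (\<Sum>w\<in>UNIV. a w * b w * c w)"
  for a b c :: "('n::finite \<Rightarrow> bool) \<Rightarrow> real"
proof -
  let ?N = "real CARD('n \<Rightarrow> bool)"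
  have inner: "(\<Sum>\<beta>\<in>UNIV. dft b \<beta> * dft c (vadd \<alpha> \<beta>)) = ?N * dft (\<lambda>w. b w * c w) \<alpha>" for \<alpha>
    by (simp only: dft_vadd_frequency dft_plancherel) (simp add: dft_def mult_ac)
  have "(\<Sum>\<alpha>\<in>UNIV. \<Sum>\<beta>\<in>UNIV. dft a \<alpha> * dft b \<beta> * dft c (vadd \<alpha> \<beta>))
      = (\<Sum>\<alpha>\<in>UNIV. dft a \<alpha> * (\<Sum>\<beta>\<in>UNIV. dft b \<beta> * dft c (vadd \<alpha> \<beta>)))"
    by (simp add: sum_distrib_left mult.assoc)
  also have "\<dots> = ?N * (\<Sum>\<alpha>\<in>UNIV. dft a \<alpha> * dft (\<lambda>w. b w * c w) \<alpha>)"
    by (simp add: inner sum_distrib_left mult_ac)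
  also have "\<dots> = ?N\<^sup>2 * (\<Sum>w\<in>UNIV. a w * b w * c w)"
    by (simp add: dft_plancherel power2_eq_square mult_ac)
  finally show ?thesis .
qed

lemma sum_dft_cube:
  "(\<Sum>\<alpha>\<in>UNIV. (dft a \<alpha>)^3) = real CARD('n \<Rightarrow> bool) * (\<Sum>s\<in>UNIV. autocorr a s * a s)"
  for a :: "('n::finite \<Rightarrow> bool) \<Rightarrow> real"
proof -
  have "(dft a \<alpha>)^3 = dft (autocorr a) \<alpha> * dft a \<alpha>" for \<alpha>
    by (simp add: dft_square[symmetric] power3_eq_cube power2_eq_square)
  then show ?thesis
    by (simp add: dft_plancherel)
qed

lemma autocorr_fder_commute: "autocorr (fder f y) s = autocorr (fder f s) y"
proof -
  have "vadd (vadd z s) y = vadd (vadd z y) s" for z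
    unfolding vadd_def by auto
  then show ?thesis
    unfolding autocorr_def fder_def by (simp add: mult_ac)
qed

lemma sum_symmetric_kernel_triple:
  assumes "\<And>x w. K x w = K w x"
  shows "(\<Sum>x\<in>UNIV. \<Sum>y\<in>UNIV. \<Sum>w\<in>UNIV. K x w * K y w * K (vadd x y) w)
       = (\<Sum>w\<in>UNIV. \<Sum>s\<in>UNIV. autocorr (K w) s * K w s)"
proof -
  have "(\<Sum>x\<in>UNIV. \<Sum>y\<in>UNIV. \<Sum>w\<in>UNIV. K x w * K y w * K (vadd x y) w)
      = (\<Sum>w\<in>UNIV. \<Sum>x\<in>UNIV. \<Sum>y\<in>UNIV. K w x * K w y * K w (vadd x y))"
    by (subst sum.swap, rule sum.cong[OF refl], subst sum.swap) (simp add: assms[of _ w for w])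
  also have "\<dots> = (\<Sum>w\<in>UNIV. \<Sum>s\<in>UNIV. autocorr (K w) s * K w s)"
    by (simp add: autocorr_def sum_distrib_left sum_distrib_right vadd_commute mult_ac)
  finally show ?thesis .
qed

theorem lemma6p5:
  fixes f :: "('n::finite \<Rightarrow> bool) \<Rightarrow> real"
  assumes "\<forall>x. f x = 1 \<or> f x = -1"
  shows "expect (\<lambda>x. expect (\<lambda>y.
           \<Sum>\<alpha>\<in>UNIV. \<Sum>\<beta>\<in>UNIV.
             (fourier (fder f x) \<alpha>)^2 * (fourier (fder f y) \<beta>)^2
             * (fourier (fder f (vadd x y)) (vadd \<alpha> \<beta>))^2))
       = expect (\<lambda>y. \<Sum>\<alpha>\<in>UNIV. (fourier (fder f y) \<alpha>)^6)"
proof -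
  let ?N = "real CARD('n \<Rightarrow> bool)"
  define K where "K y = autocorr (fder f y)" for y
  have fourier_square: "(fourier (fder f y) \<alpha>)\<^sup>2 = dft (K y) \<alpha> / ?N\<^sup>2" for y \<alpha>
    by (simp add: K_def fourier_eq_dft power_divide dft_square)
  have fourier_sixth: "(fourier (fder f y) \<alpha>)^6 = (dft (K y) \<alpha>)^3 / ?N^6" for y \<alpha>
  proof -
    have "(fourier (fder f y) \<alpha>)^6 = ((fourier (fder f y) \<alpha>)\<^sup>2)^3"
      by (simp flip: power_mult)
    also have "\<dots> = (dft (K y) \<alpha>)^3 / ?N^6"
      by (simp add: fourier_square power_divide flip: power_mult)
    finally show ?thesis .
  qed
  have "(\<Sum>\<alpha>\<in>UNIV. \<Sum>\<beta>\<in>UNIV. (fourier (fder f x) \<alpha>)^2 * (fourier (fder f y) \<beta>)^2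
             * (fourier (fder f (vadd x y)) (vadd \<alpha> \<beta>))^2)
      = ?N\<^sup>2 * (\<Sum>w\<in>UNIV. K x w * K y w * K (vadd x y) w) / ?N^6" for x y
    by (simp add: fourier_square sum_dft_triple flip: sum_divide_distrib)
  moreover have "(\<Sum>\<alpha>\<in>UNIV. (fourier (fder f y) \<alpha>)^6) = ?N * (\<Sum>s\<in>UNIV. autocorr (K y) s * K y s) / ?N^6" for y
    by (simp add: fourier_sixth sum_dft_cube flip: sum_divide_distrib)
  moreover have "(\<Sum>x\<in>UNIV. \<Sum>y\<in>UNIV. \<Sum>w\<in>UNIV. K x w * K y w * K (vadd x y) w)
      = (\<Sum>w\<in>UNIV. \<Sum>s\<in>UNIV. autocorr (K w) s * K w s)"
    by (rule sum_symmetric_kernel_triple) (simp add: K_def autocorr_fder_commute)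
  ultimately show ?thesis
    by (simp add: expect_def power_def flip: sum_divide_distrib sum_distrib_left)
qed

end
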